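(* For integers $n\ge1$ and $0\le k\le n-1$, $$\sum_{r=0}^{n}N_k^{n,r}=2^{k+1}(k+1)\frac{(2n-k-2)!}{n!\,(n-k-1)!}.$$ Equivalently, if two independent walkers start at the origin and each takes $n$ steps, each step being N or E with probability $1/2$ independently, then conditional on finishing at the same point, the probability that their vertex sets share exactly $k$ points other than the origin and the common endpoint is $$p(n,k)=\frac{2^{k+1}(k+1)(2n-k-2)!\,n!}{(n-k-1)!\,(2n)!}.$$
   Context: For $n\ge1$ and $0\le r\le n$, a lattice path from $(0,0)$ to $(r,n-r)$ is a sequence of lattice points $v_0=(0,0),\dots,v_n=(r,n-r)$ with each step $v_i-v_{i-1}\in\{(1,0)\ (\text{E}),(0,1)\ (\text{N})\}$; its vertex set is $\{v_0,\dots,v_n\}$. $N_k^{n,r}$ denotes the number of ordered pairs of lattice paths from $(0,0)$ to $(r,n-r)$ whose vertex sets share exactly $k$ points other than $(0,0)$ and $(r,n-r)$. *)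

theory Defs
  imports Complex_Main
begin

definition lattice_path :: "nat \<Rightarrow> nat \<Rightarrow> (nat \<times> nat) list \<Rightarrow> bool" where
  "lattice_path n r vs \<longleftrightarrow>
     length vs = n + 1 \<and> vs ! 0 = (0, 0) \<and> vs ! n = (r, n - r) \<and>
     (\<forall>i. 1 \<le> i \<and> i \<le> n \<longrightarrow>
        (vs ! i = (fst (vs ! (i - 1)) + 1, snd (vs ! (i - 1))) \<or>
         vs ! i = (fst (vs ! (i - 1)), snd (vs ! (i - 1)) + 1)))"

definition lattice_paths :: "nat \<Rightarrow> nat \<Rightarrow> (nat \<times> nat) list set" where
  "lattice_paths n r = {vs. lattice_path n r vs}"

definition N_count :: "nat \<Rightarrow> nat \<Rightarrow> nat \<Rightarrow> nat" where
  "N_count k n r = card {(p, q). p \<in> lattice_paths n r \<and> q \<in> lattice_paths n r \<and>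
       card ((set p \<inter> set q) - {(0, 0), (r, n - r)}) = k}"

end

theory Submission
  imports Defs
begin

(* Encode a lattice path by its word of steps. The vertex after i steps lies on the
   antidiagonal x + y = i, so two paths can only share their vertex at time i, and they do
   so iff the gap, the difference of their E-counts after i steps, vanishes at time i.
   The gap moves by +1, -1 or 0 with multiplicities 1, 1, 2. Summing over the endpoint r
   only asks the gap to end at 0, and k shared interior vertices mean k + 1 zeros of the
   gap at the times 0, ..., n - 1. Classifying pairs of words by their first steps gives a
   recursion in n, which is solved by the ballot-type expression
   2^j (C(2n-j-1, n+|d|-1) - C(2n-j-1, n+|d|)) for pairs whose gap starts at d and has
   j zeros; for d = 0 and j = k + 1 it is the stated quotient of factorials. *)

(* Step words: True is an E step, False an N step. *)
definition vertex :: "bool list \<Rightarrow> nat \<Rightarrow> nat \<times> nat" where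
  "vertex u i = (count_list (take i u) True, i - count_list (take i u) True)"

definition vertices :: "bool list \<Rightarrow> (nat \<times> nat) list" where
  "vertices u = map (vertex u) [0..<Suc (length u)]"

lemma count_list_take_Suc:
  "i < length u \<Longrightarrow>
   count_list (take (Suc i) u) True = count_list (take i u) True + of_bool (u ! i)"
  by (simp add: take_Suc_conv_app_nth)

lemma count_list_take_le: "count_list (take i u) True \<le> i"
  using count_le_length[of "take i u" True] by simp

lemma vertex_0 [simp]: "vertex u 0 = (0, 0)"
  by (simp add: vertex_def)

lemma fst_add_snd_vertex: "fst (vertex u i) + snd (vertex u i) = i"
  using count_list_take_le[of i u] by (simp add: vertex_def)

lemma vertex_Suc:
  assumes "i < length u"
  shows "vertex u (Suc i) =
    (if u ! i then (fst (vertex u i) + 1, snd (vertex u i))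
     else (fst (vertex u i), snd (vertex u i) + 1))"
  using count_list_take_le[of i u]
  by (simp add: vertex_def count_list_take_Suc[OF assms] Suc_diff_le)

lemma length_vertices [simp]: "length (vertices u) = Suc (length u)"
  by (simp add: vertices_def del: upt_Suc)

lemma nth_vertices: "i \<le> length u \<Longrightarrow> vertices u ! i = vertex u i"
  by (simp add: vertices_def nth_append del: upt_Suc)

lemma set_vertices: "set (vertices u) = vertex u ` {0..length u}"
  by (simp add: vertices_def atLeastLessThanSuc_atLeastAtMost del: upt_Suc)

lemma lattice_path_vertices: "lattice_path (length u) (count_list u True) (vertices u)"
proof -
  have "vertices u ! i = (fst (vertices u ! (i - 1)) + 1, snd (vertices u ! (i - 1))) \<or>
        vertices u ! i = (fst (vertices u ! (i - 1)), snd (vertices u ! (i - 1)) + 1)"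
    if "1 \<le> i" "i \<le> length u" for i
    using that vertex_Suc[of "i - 1" u] by (cases i) (auto simp: nth_vertices)
  moreover have "vertices u ! length u = (count_list u True, length u - count_list u True)"
    by (simp add: nth_vertices vertex_def)
  ultimately show ?thesis
    unfolding lattice_path_def by (simp add: nth_vertices[of 0])
qed

lemma lattice_path_imp_vertices:
  assumes "lattice_path n r vs"
  obtains u where "length u = n" "count_list u True = r" "vs = vertices u"
proof -
  define u where "u = map (\<lambda>i. fst (vs ! Suc i) \<noteq> fst (vs ! i)) [0..<n]"
  have len: "length u = n" by (simp add: u_def)
  have vs_vertex: "vs ! i = vertex u i" if "i \<le> n" for i
    using that
  proof (induction i)
    case 0
    then show ?case using assms by (simp add: lattice_path_def)
  next
    case (Suc m)
    then have "vs ! Suc m = (fst (vs ! m) + 1, snd (vs ! m)) \<or>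
               vs ! Suc m = (fst (vs ! m), snd (vs ! m) + 1)"
      using assms unfolding lattice_path_def by (metis Suc_eq_plus1 diff_Suc_1 le_add2)
    moreover have "u ! m \<longleftrightarrow> fst (vs ! Suc m) \<noteq> fst (vs ! m)"
      using Suc.prems by (simp add: u_def)
    ultimately show ?case
      using Suc len vertex_Suc[of m u] by auto
  qed
  have "vs = vertices u"
    using assms len vs_vertex by (intro nth_equalityI) (auto simp: lattice_path_def nth_vertices)
  moreover have "count_list u True = r"
    using assms vs_vertex[of n] len by (simp add: lattice_path_def vertex_def)
  ultimately show ?thesis
    using len that by blast
qed

lemma inj_vertices: "inj vertices"
proof (rule injI)
  fix u v assume eq: "vertices u = vertices v"
  then have len: "length u = length v"
    using length_vertices by (metis Suc_inject)
  show "u = v"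
  proof (rule nth_equalityI)
    fix i assume "i < length u"
    with eq len have "vertex u i = vertex v i" "vertex u (Suc i) = vertex v (Suc i)"
      by (metis Suc_leI less_imp_le_nat nth_vertices)+
    with \<open>i < length u\<close> len show "u ! i = v ! i"
      using vertex_Suc[of i u] vertex_Suc[of i v] by (auto split: if_splits)
  qed (rule len)
qed

lemma bij_betw_vertices:
  "bij_betw vertices {u. length u = n \<and> count_list u True = r} (lattice_paths n r)"
proof (rule bij_betw_imageI)
  show "inj_on vertices {u. length u = n \<and> count_list u True = r}"
    using inj_vertices by (rule inj_on_subset) simp
  show "vertices ` {u. length u = n \<and> count_list u True = r} = lattice_paths n r"
    unfolding lattice_paths_def
    by (auto intro: lattice_path_vertices elim!: lattice_path_imp_vertices)
qed

definition gap :: "int \<Rightarrow> bool list \<Rightarrow> bool list \<Rightarrow> nat \<Rightarrow> int" where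
  "gap d u v i = d + int (count_list (take i u) True) - int (count_list (take i v) True)"

lemma shared_interior_vertices:
  assumes "length u = n" "length v = n" "count_list u True = r" "count_list v True = r"
  shows "set (vertices u) \<inter> set (vertices v) - {(0, 0), (r, n - r)} =
         vertex u ` {i \<in> {1..<n}. gap 0 u v i = 0}"
proof -
  have same_time: "i = j" if "vertex u i = vertex v j" for i j
    using that fst_add_snd_vertex by metis
  have meet: "vertex u i = vertex v i \<longleftrightarrow> gap 0 u v i = 0" for i
    by (auto simp: vertex_def gap_def)
  have "r \<le> n"
    using assms count_le_length[of u True] by simp
  then have ends: "vertex u i \<in> {(0, 0), (r, n - r)} \<longleftrightarrow> i = 0 \<or> i = n" if "i \<le> n" for i
    using that assms fst_add_snd_vertex[of u i] by (auto simp: vertex_def)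
  show ?thesis
  proof (intro equalityI subsetI)
    fix x assume "x \<in> set (vertices u) \<inter> set (vertices v) - {(0, 0), (r, n - r)}"
    then obtain i j where "x = vertex u i" "x = vertex v j" "i \<le> n" "x \<notin> {(0, 0), (r, n - r)}"
      unfolding set_vertices assms(1,2) by (metis DiffD1 DiffD2 IntE atLeastAtMost_iff imageE)
    moreover from this have "gap 0 u v i = 0"
      using same_time meet by metis
    moreover from calculation have "1 \<le> i" "i < n"
      using ends[of i] by auto
    ultimately show "x \<in> vertex u ` {i \<in> {1..<n}. gap 0 u v i = 0}"
      by auto
  next
    fix x assume "x \<in> vertex u ` {i \<in> {1..<n}. gap 0 u v i = 0}"
    then obtain i where i: "x = vertex u i" "1 \<le> i" "i < n" "gap 0 u v i = 0"
      by auto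
    then have "x = vertex v i"
      using meet by simp
    with i show "x \<in> set (vertices u) \<inter> set (vertices v) - {(0, 0), (r, n - r)}"
      unfolding set_vertices assms(1,2) using ends[of i] by (auto intro!: image_eqI[of _ _ i])
  qed
qed

lemma inj_vertex: "inj (vertex u)"
  by (metis injI fst_add_snd_vertex)

lemma N_count_eq_card_step_words:
  "N_count k n r = card {(u, v). length u = n \<and> length v = n \<and>
     count_list u True = r \<and> count_list v True = r \<and> card {i \<in> {1..<n}. gap 0 u v i = 0} = k}"
  (is "_ = card ?S")
proof -
  define W where "W = {u. length u = n \<and> count_list u True = r}"
  have paths: "lattice_paths n r = vertices ` W"
    using bij_betw_vertices unfolding W_def by (metis bij_betw_imp_surj_on)
  have shared: "card (set (vertices u) \<inter> set (vertices v) - {(0, 0), (r, n - r)}) =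
      card {i \<in> {1..<n}. gap 0 u v i = 0}" if "u \<in> W" "v \<in> W" for u v
    using that shared_interior_vertices[of u n v r] card_image[OF inj_on_subset[OF inj_vertex]]
    by (simp add: W_def)
  have "{(p, q). p \<in> lattice_paths n r \<and> q \<in> lattice_paths n r \<and>
          card (set p \<inter> set q - {(0, 0), (r, n - r)}) = k} = map_prod vertices vertices ` ?S"
    unfolding paths using shared by (auto simp: W_def image_iff)
  moreover have "inj (map_prod vertices vertices)"
    by (rule prod.inj_map[OF inj_vertices inj_vertices])
  ultimately show ?thesis
    unfolding N_count_def by (simp add: card_image inj_on_subset)
qed

definition meetings :: "int \<Rightarrow> bool list \<Rightarrow> bool list \<Rightarrow> nat" where
  "meetings d u v = card {i. i < length u \<and> gap d u v i = 0}"

lemma gap_0 [simp]: "gap d u v 0 = d"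
  by (simp add: gap_def)

lemma gap_Cons_Suc [simp]:
  "gap d (a # u) (b # v) (Suc i) = gap (d + of_bool a - of_bool b) u v i"
  by (cases a; cases b) (simp_all add: gap_def)

lemma meetings_Cons:
  "meetings d (a # u) (b # v) = of_bool (d = 0) + meetings (d + of_bool a - of_bool b) u v"
proof -
  let ?e = "d + of_bool a - of_bool b"
  have "{i. i < length (a # u) \<and> gap d (a # u) (b # v) i = 0} =
        {i. i = 0 \<and> d = 0} \<union> Suc ` {i. i < length u \<and> gap ?e u v i = 0}"
    by (auto simp: less_Suc_eq_0_disj)
  then show ?thesis
    unfolding meetings_def by (simp add: card_Un_disjoint card_image)
qed

lemma meetings_0_eq:
  assumes "1 \<le> length u"
  shows "meetings 0 u v = Suc (card {i \<in> {1..<length u}. gap 0 u v i = 0})"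
proof -
  have "{i. i < length u \<and> gap 0 u v i = 0} = insert 0 {i \<in> {1..<length u}. gap 0 u v i = 0}"
    using assms by auto
  then show ?thesis
    unfolding meetings_def
    by (simp only:) (rule card_insert_disjoint; auto intro: finite_subset[of _ "{..<length u}"])
qed

definition bridge_count :: "int \<Rightarrow> nat \<Rightarrow> nat \<Rightarrow> nat" where
  "bridge_count d j n = card {(u, v). length u = n \<and> length v = n \<and>
     gap d u v n = 0 \<and> meetings d u v = j}"

lemma finite_lists_length: "finite {xs :: 'a :: finite list. length xs = n}"
  using finite_lists_length_eq[of "UNIV :: 'a set" n] by simp

lemma card_list_pairs_Suc:
  fixes P :: "'a :: finite list \<Rightarrow> 'b :: finite list \<Rightarrow> bool"
  shows "card {(u, v). length u = Suc n \<and> length v = Suc n \<and> P u v} =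
    (\<Sum>a\<in>UNIV. \<Sum>b\<in>UNIV. card {(u, v). length u = n \<and> length v = n \<and> P (a # u) (b # v)})"
proof -
  define S where "S a b = {(u, v). length u = n \<and> length v = n \<and> P (a # u) (b # v)}" for a b
  let ?cons = "\<lambda>((a, b), (u, v)). (a # u, b # v)"
  have "{(u, v). length u = Suc n \<and> length v = Suc n \<and> P u v} =
        ?cons ` (SIGMA (a, b):UNIV. S a b)"
    by (auto simp: S_def length_Suc_conv image_iff)
  moreover have "inj ?cons"
    by (auto intro: injI)
  moreover have "finite (S a b)" for a b
    by (rule finite_subset[of _ "{u. length u = n} \<times> {v. length v = n}"])
      (auto simp: S_def finite_lists_length)
  ultimately have "card {(u, v). length u = Suc n \<and> length v = Suc n \<and> P u v} =
      card (SIGMA (a, b):UNIV. S a b)"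
    using card_image[OF inj_on_subset[OF \<open>inj ?cons\<close> subset_UNIV]] by (simp only:)
  also have "\<dots> = (\<Sum>(a, b)\<in>UNIV \<times> UNIV. card (S a b))"
    using \<open>finite (S _ _)\<close> by (simp add: card_SigmaI split_def)
  finally show ?thesis
    by (simp add: sum.cartesian_product S_def)
qed

lemma bridge_count_0: "bridge_count d j 0 = of_bool (d = 0 \<and> j = 0)"
proof -
  have "{(u, v). length u = 0 \<and> length v = 0 \<and> gap d u v 0 = 0 \<and> meetings d u v = j} =
        (if d = 0 \<and> j = 0 then {([], [])} else {})"
    by (auto simp: meetings_def)
  then show ?thesis
    by (simp add: bridge_count_def)
qed

lemma bridge_count_Suc:
  "bridge_count d j (Suc n) =
    (if d = 0 \<and> j = 0 then 0
     else let j' = j - of_bool (d = 0) in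
       2 * bridge_count d j' n + bridge_count (d + 1) j' n + bridge_count (d - 1) j' n)"
proof -
  have first_step:
    "card {(u, v). length u = n \<and> length v = n \<and>
        gap d (a # u) (b # v) (Suc n) = 0 \<and> meetings d (a # u) (b # v) = j} =
     (if d = 0 \<and> j = 0 then 0
      else bridge_count (d + of_bool a - of_bool b) (j - of_bool (d = 0)) n)" for a b
    by (auto simp: bridge_count_def meetings_Cons intro: arg_cong[where f = card])
  show ?thesis
    unfolding bridge_count_def[of d j "Suc n"] card_list_pairs_Suc first_step
    by (simp add: UNIV_bool Let_def)
qed

(* Agrees with bridge_count only for n \<ge> 1: at n = 0 the truncated subtractions give junk. *)
definition bridge_formula :: "nat \<Rightarrow> nat \<Rightarrow> nat \<Rightarrow> int" where
  "bridge_formula a j n = (if n < j then 0 else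
     2 ^ j * (int ((2 * n - j - 1) choose (n + a - 1)) - int ((2 * n - j - 1) choose (n + a))))"

lemma binomial_Suc_Suc_twice:
  "Suc (Suc N) choose Suc (Suc m) = (N choose m) + 2 * (N choose Suc m) + (N choose Suc (Suc m))"
  by simp

lemma bridge_formula_Suc:
  assumes "1 \<le> a" "1 \<le> n"
  shows "bridge_formula a j (Suc n) =
    2 * bridge_formula a j n + bridge_formula (a + 1) j n + bridge_formula (a - 1) j n"
proof (cases "n < j")
  case True
  then consider "Suc n < j" | "j = Suc n"
    by linarith
  then show ?thesis
  proof cases
    case 2
    then have "2 * Suc n - j - 1 = n"
      by simp
    with 2 assms show ?thesis
      by (simp add: bridge_formula_def binomial_eq_0)
  qed (use True in \<open>simp add: bridge_formula_def\<close>)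
next
  case False
  define N where "N = 2 * n - j - 1"
  define m where "m = n + a - 2"
  have shifts: "2 * Suc n - j - 1 = Suc (Suc N)" "2 * n - j - 1 = N"
    "Suc n + a - 1 = Suc (Suc m)" "Suc n + a = Suc (Suc (Suc m))"
    "n + a - 1 = Suc m" "n + a = Suc (Suc m)"
    "n + (a + 1) - 1 = Suc (Suc m)" "n + (a + 1) = Suc (Suc (Suc m))"
    "n + (a - 1) - 1 = m" "n + (a - 1) = Suc m"
    using assms False by (simp_all add: N_def m_def)
  \<comment> \<open>Pascal's rule twice on the left leaves only binomial coefficients of N.\<close>
  show ?thesis
    using False unfolding bridge_formula_def shifts
    by (simp add: binomial_Suc_Suc_twice algebra_simps)
qed

lemma bridge_formula_Suc_0:
  assumes "1 \<le> j" "1 \<le> n"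
  shows "bridge_formula 0 j (Suc n) =
    2 * bridge_formula 0 (j - 1) n + 2 * bridge_formula 1 (j - 1) n"
proof (cases "Suc n < j")
  case True
  then show ?thesis
    by (simp add: bridge_formula_def)
next
  case False
  define N where "N = 2 * n - j"
  obtain p where p: "n = Suc p"
    using assms by (cases n) auto
  have shifts: "2 * Suc n - j - 1 = Suc N" "2 * n - (j - 1) - 1 = N"
    using assms False by (simp_all add: N_def)
  have "(2 :: int) ^ j = 2 * 2 ^ (j - 1)"
    using assms by (simp add: power_eq_if)
  moreover have "\<not> n < j - 1"
    using False by simp
  ultimately show ?thesis
    using False unfolding bridge_formula_def shifts by (simp add: p algebra_simps)
qed

lemma bridge_formula_0_0: "1 \<le> n \<Longrightarrow> bridge_formula 0 0 n = 0"
  using binomial_symmetric[of n "2 * n - 1"] by (simp add: bridge_formula_def)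

lemma bridge_count_1: "int (bridge_count d j 1) = bridge_formula (nat \<bar>d\<bar>) j 1"
proof -
  have "bridge_count d j 1 = (if d = 0 \<and> j = 0 then 0 else
      let j' = j - of_bool (d = 0) in
        2 * of_bool (d = 0 \<and> j' = 0) + of_bool (d = -1 \<and> j' = 0) + of_bool (d = 1 \<and> j' = 0))"
    using bridge_count_Suc[of d j 0] by (simp add: bridge_count_0 algebra_simps)
  then show ?thesis
    by (auto simp: bridge_formula_def Let_def binomial_eq_0 not_less le_Suc_eq)
qed

lemma bridge_count_eq_bridge_formula:
  assumes "1 \<le> n"
  shows "int (bridge_count d j n) = bridge_formula (nat \<bar>d\<bar>) j n"
  using assms
proof (induction n arbitrary: d j rule: nat_induct_at_least)
  case base
  then show ?case
    by (rule bridge_count_1)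
next
  case (Suc n)
  consider "d = 0" "j = 0" | "d = 0" "1 \<le> j" | "d \<noteq> 0"
    by linarith
  then show ?case
  proof cases
    case 1
    then show ?thesis
      using bridge_formula_0_0 by (simp add: bridge_count_Suc)
  next
    case 2
    then show ?thesis
      using Suc bridge_formula_Suc_0[of j n] by (simp add: bridge_count_Suc Let_def)
  next
    case 3
    define a where "a = nat \<bar>d\<bar>"
    have "1 \<le> a"
      using 3 by (simp add: a_def)
    moreover have "nat \<bar>d + 1\<bar> = a + 1 \<and> nat \<bar>d - 1\<bar> = a - 1 \<or>
                   nat \<bar>d + 1\<bar> = a - 1 \<and> nat \<bar>d - 1\<bar> = a + 1"
      using 3 unfolding a_def by linarith
    ultimately show ?thesis
      using 3 Suc bridge_formula_Suc[of a n j] by (auto simp: bridge_count_Suc a_def)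
  qed
qed

lemma ballot_difference:
  "real ((a + b) choose a) - real ((a + b) choose Suc a) =
   fact (a + b) * (real (Suc a) - real b) / (fact (Suc a) * fact b)"
proof -
  have "Suc a * ((a + b) choose Suc a) = b * ((a + b) choose a)"
    using binomial_absorption[of a "a + b"] binomial_absorb_comp[of "a + b" a] by simp
  then have absorb: "real ((a + b) choose Suc a) = real b * real ((a + b) choose a) / real (Suc a)"
    by (simp add: field_simps flip: of_nat_mult)
  have "fact (a + b) / (fact (Suc a) * fact b) = real ((a + b) choose a) / real (Suc a)"
    by (simp add: binomial_fact fact_Suc field_simps)
  then have "fact (a + b) * (real (Suc a) - real b) / (fact (Suc a) * fact b) =
      (real (Suc a) - real b) * (real ((a + b) choose a) / real (Suc a))"
    by (metis times_divide_eq_right mult.commute)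
  then show ?thesis
    unfolding absorb by (simp add: field_simps)
qed

lemma sum_N_count_eq_bridge_count:
  assumes "1 \<le> n"
  shows "(\<Sum>r = 0..n. N_count k n r) = bridge_count 0 (Suc k) n"
proof -
  define S where "S r = {(u, v). length u = n \<and> length v = n \<and>
     count_list u True = r \<and> count_list v True = r \<and> card {i \<in> {1..<n}. gap 0 u v i = 0} = k}"
    for r
  have "finite (S r)" for r
    by (rule finite_subset[of _ "{u. length u = n} \<times> {v. length v = n}"])
      (auto simp: S_def finite_lists_length)
  then have "(\<Sum>r = 0..n. card (S r)) = card (\<Union>r\<in>{0..n}. S r)"
    by (intro card_UN_disjoint[symmetric]) (auto simp: S_def)
  also have "(\<Union>r\<in>{0..n}. S r) = {(u, v). length u = n \<and> length v = n \<and>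
      gap 0 u v n = 0 \<and> meetings 0 u v = Suc k}"
    using assms by (auto simp: S_def gap_def meetings_0_eq) (metis count_le_length)
  finally show ?thesis
    by (simp add: N_count_eq_card_step_words S_def bridge_count_def)
qed

theorem mainTheorem7:
  fixes n k :: nat
  assumes "n \<ge> 1" and "k \<le> n - 1"
  shows "real (\<Sum>r = 0..n. N_count k n r) =
         2 ^ (k + 1) * real (k + 1) * fact (2 * n - k - 2) / (fact n * fact (n - k - 1))"
proof -
  define a where "a = n - 1"
  define b where "b = n - k - 1"
  have n: "n = Suc a" and k: "real (k + 1) = real (Suc a) - real b"
    using assms by (simp_all add: a_def b_def of_nat_diff)
  have top: "2 * n - (k + 1) - 1 = a + b" "2 * n - k - 2 = a + b"
    using assms by (simp_all add: a_def b_def)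
  have "int (\<Sum>r = 0..n. N_count k n r) = bridge_formula 0 (k + 1) n"
    using sum_N_count_eq_bridge_count[OF assms(1)] bridge_count_eq_bridge_formula[OF assms(1)]
    by simp
  also have "\<dots> = 2 ^ (k + 1) * (int ((a + b) choose a) - int ((a + b) choose Suc a))"
    using assms top(1) by (simp add: bridge_formula_def n)
  finally have "real_of_int (int (\<Sum>r = 0..n. N_count k n r)) =
      real_of_int (2 ^ (k + 1) * (int ((a + b) choose a) - int ((a + b) choose Suc a)))"
    by (rule arg_cong)
  then have "real (\<Sum>r = 0..n. N_count k n r) =
      2 ^ (k + 1) * (real ((a + b) choose a) - real ((a + b) choose Suc a))"
    by (simp only: of_int_of_nat_eq of_int_mult of_int_power of_int_numeral of_int_diff)
  also have "\<dots> = 2 ^ (k + 1) * (fact (a + b) * real (k + 1) / (fact n * fact b))"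
    unfolding ballot_difference k n by (simp add: field_simps)
  finally show ?thesis
    using top(2) by (simp add: b_def)
qed

end
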